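(* Let $v\in A$ be a monic irreducible polynomial of degree $d$, and let $\lambda$ (an element of the algebraic closure of $\mathbb{F}_q$ in $\mathbb{C}_\infty$) be a root of $v$, viewed as a polynomial in $\theta$ over $\mathbb{F}_q$. Then \[(-1)^d v=\prod_{i=1}^d \omega(\lambda^{q^i})^{q-1}.\]
   Context: $A=\mathbb{F}_q[\theta]$; $\mathbb{C}_\infty$ the completion of an algebraic closure of the completion of $\mathbb{F}_q(\theta)$ for $|\theta|=q$. Fix $\iota\in\mathbb{C}_\infty$ with $\iota^{q-1}=-\theta$; $\omega(t)=\iota\prod_{j\ge0}(1-t/\theta^{q^j})^{-1}$, a power series in $t$ converging for $|t|\le1$ (so it can be evaluated at $\lambda$, which satisfies $|\lambda|=1$). *)

theory Defs
  imports "HOL-Computational_Algebra.Polynomial"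
begin

text \<open>Abstract description of the ambient field C_infinity: a field with a
non-archimedean absolute value, complete and algebraically closed.\<close>

definition nonarch_abs :: "('a::field \<Rightarrow> real) \<Rightarrow> bool" where
  "nonarch_abs N \<longleftrightarrow> (\<forall>x. N x \<ge> 0) \<and> (\<forall>x. N x = 0 \<longleftrightarrow> x = 0) \<and>
     (\<forall>x y. N (x * y) = N x * N y) \<and> (\<forall>x y. N (x + y) \<le> max (N x) (N y))"

definition conv_wrt :: "('a::field \<Rightarrow> real) \<Rightarrow> (nat \<Rightarrow> 'a) \<Rightarrow> 'a \<Rightarrow> bool" where
  "conv_wrt N f L \<longleftrightarrow> (\<forall>\<epsilon>>0. \<exists>M. \<forall>n\<ge>M. N (f n - L) < \<epsilon>)"

definition complete_wrt :: "('a::field \<Rightarrow> real) \<Rightarrow> bool" where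
  "complete_wrt N \<longleftrightarrow> (\<forall>f. (\<forall>\<epsilon>>0. \<exists>M. \<forall>m\<ge>M. \<forall>n\<ge>M. N (f m - f n) < \<epsilon>)
        \<longrightarrow> (\<exists>L. conv_wrt N f L))"

definition alg_closed :: "'a::field itself \<Rightarrow> bool" where
  "alg_closed _ \<longleftrightarrow> (\<forall>P::'a poly. degree P \<ge> 1 \<longrightarrow> (\<exists>x. poly P x = 0))"

text \<open>The copy of F_q inside the field: the roots of X^q - X.\<close>
definition Fq :: "nat \<Rightarrow> 'a::field set" where
  "Fq q = {x. x ^ q = x}"

definition irreducible_over :: "'a::field set \<Rightarrow> 'a poly \<Rightarrow> bool" where
  "irreducible_over F P \<longleftrightarrow> (\<forall>i. coeff P i \<in> F) \<and> degree P \<ge> 1 \<and>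
     (\<forall>a b. (\<forall>i. coeff a i \<in> F) \<longrightarrow> (\<forall>i. coeff b i \<in> F) \<longrightarrow> P = a * b
        \<longrightarrow> degree a = 0 \<or> degree b = 0)"

definition omega :: "('a::field \<Rightarrow> real) \<Rightarrow> nat \<Rightarrow> 'a \<Rightarrow> 'a \<Rightarrow> 'a \<Rightarrow> 'a" where
  "omega N q \<theta> \<iota> t =
     \<iota> * (THE L. conv_wrt N (\<lambda>n. \<Prod>j<n. inverse (1 - t / \<theta> ^ (q ^ j))) L)"

end

theory Submission
  imports Defs "HOL-Computational_Algebra.Primes"
begin

text \<open>
  Write \<open>\<lambda>\<^sub>i = \<lambda>\<^sup>q\<^sup>^\<^sup>i\<close> and \<open>d = deg v\<close>.  Since \<open>v\<close> is monic irreducible over \<open>F_q\<close>,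
  it splits as \<open>v = \<Prod>i=1..d. (X - \<lambda>\<^sub>i)\<close> with the \<open>\<lambda>\<^sub>i\<close> forming one Frobenius orbit; as that
  orbit is finite, \<open>|\<lambda>| \<le> 1\<close>.  Hence each \<open>\<omega>(\<lambda>\<^sub>i) = \<iota> L\<^sub>i\<close> where \<open>L\<^sub>i\<close> is the limit of the
  convergent product \<open>\<Prod>j. (1 - \<lambda>\<^sub>i/\<theta>\<^sup>q\<^sup>^\<^sup>j)\<inverse>\<close>.  Multiplying over \<open>i\<close>, the \<open>j\<close>-th factors give
  \<open>v(\<theta>\<^sup>q\<^sup>^\<^sup>j)/\<theta>\<^sup>d\<^sup>q\<^sup>^\<^sup>j = x\<^sub>0\<^sup>q\<^sup>^\<^sup>j\<close> with \<open>x\<^sub>0 = v(\<theta>)/\<theta>\<^sup>d\<close>, so the \<open>(q-1)\<close>-th power of the partial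
  product telescopes to \<open>x\<^sub>0/x\<^sub>0\<^sup>q\<^sup>^\<^sup>n\<close>, which tends to \<open>x\<^sub>0\<close> because \<open>|x\<^sub>0 - 1| < 1\<close>.  With
  \<open>\<iota>\<^sup>q\<^sup>-\<^sup>1 = -\<theta>\<close> this yields \<open>\<Prod>i \<omega>(\<lambda>\<^sub>i)\<^sup>q\<^sup>-\<^sup>1 = (-\<theta>)\<^sup>d x\<^sub>0 = (-1)\<^sup>d v(\<theta>)\<close>.
\<close>

section \<open>Non-archimedean absolute values\<close>

context
  fixes N :: "'a::field \<Rightarrow> real"
  assumes na: "nonarch_abs N"
begin

lemma na_ge0: "N x \<ge> 0" using na unfolding nonarch_abs_def by blast
lemma na_eq0: "N x = 0 \<longleftrightarrow> x = 0" using na unfolding nonarch_abs_def by blast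
lemma na_mult: "N (x * y) = N x * N y" using na unfolding nonarch_abs_def by blast
lemma na_add: "N (x + y) \<le> max (N x) (N y)" using na unfolding nonarch_abs_def by blast

lemma na_0: "N 0 = 0" using na_eq0 by simp

lemma na_1: "N 1 = 1"
proof -
  have "N 1 = N 1 * N 1" using na_mult[of 1 1] by simp
  moreover have "N 1 \<noteq> 0" using na_eq0 by simp
  ultimately show ?thesis by simp
qed

lemma na_minus: "N (- x) = N x"
proof -
  have "N (-1) * N (-1) = 1" using na_mult[of "-1" "-1"] na_1 by simp
  with na_ge0[of "-1"] have "N (-1) = 1"
    by (metis abs_of_nonneg abs_one power2_eq_square real_sqrt_abs real_sqrt_one)
  thus ?thesis using na_mult[of "-1" x] by simp
qed

lemma na_diff: "N (x - y) \<le> max (N x) (N y)"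
  using na_add[of x "-y"] na_minus[of y] by simp

lemma na_diff_commute: "N (x - y) = N (y - x)"
  using na_minus[of "x - y"] by simp

lemma na_power: "N (x ^ n) = N x ^ n"
  by (induction n) (auto simp: na_1 na_mult)

lemma na_inverse: "N (inverse x) = inverse (N x)"
proof (cases "x = 0")
  case False
  have "N x * N (inverse x) = 1" using na_mult[of x "inverse x"] False na_1 by simp
  thus ?thesis by (simp add: inverse_unique)
qed (simp add: na_0)

lemma na_divide: "N (x / y) = N x / N y"
  by (simp add: divide_inverse na_mult na_inverse)

lemma na_ultra_eq: assumes "N y < N x" shows "N (x + y) = N x"
proof -
  have "N (x + y) \<le> N x" using na_add[of x y] assms by simp
  moreover have "N x \<le> max (N (x + y)) (N (-y))" using na_add[of "x + y" "-y"] by simp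
  ultimately show ?thesis using assms na_minus[of y] by (auto simp: max_def split: if_splits)
qed

lemma na_one_plus: assumes "N w < 1" shows "N (1 + w) = 1"
  using na_ultra_eq[of w 1] assms na_1 by simp

lemma na_one_minus: assumes "N s < 1" shows "N (1 - s) = 1"
  using na_one_plus[of "- s"] assms na_minus[of s] by simp

lemma prod_near_one:
  assumes "finite S" "\<forall>i\<in>S. N (s i) \<le> r" "0 \<le> r" "r \<le> 1"
  shows "N ((\<Prod>i\<in>S. (1 - s i)) - 1) \<le> r"
  using assms(1,2)
proof (induction S rule: finite_induct)
  case empty then show ?case using assms by (simp add: na_0)
next
  case (insert x F)
  define P where "P = (\<Prod>i\<in>F. (1 - s i))"
  have IH: "N (P - 1) \<le> r" using insert P_def by simp
  have "N P \<le> max (N (P - 1)) (N 1)" using na_add[of "P - 1" 1] by simp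
  hence NP: "N P \<le> 1" using IH assms na_1 by simp
  have "N (s x * P) = N (s x) * N P" by (simp add: na_mult)
  also have "\<dots> \<le> r * 1" using insert(4) NP na_ge0 assms(3) by (intro mult_mono) auto
  finally have "N (s x * P) \<le> r" by simp
  moreover have "(1 - s x) * P - 1 = (P - 1) - s x * P" by (simp add: algebra_simps)
  ultimately have "N ((1 - s x) * P - 1) \<le> r" using na_diff[of "P - 1" "s x * P"] IH
    by (metis max.bounded_iff order_trans)
  thus ?case using insert(1,2) unfolding P_def by simp
qed

subsection \<open>Limits with respect to \<open>N\<close>\<close>

lemma conv_unique: assumes "conv_wrt N f a" "conv_wrt N f b" shows "a = b"
proof (rule ccontr)
  assume "a \<noteq> b"
  hence e: "N (a - b) > 0" using na_eq0 na_ge0 by (metis eq_iff_diff_eq_0 less_eq_real_def)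
  obtain M1 where M1: "\<forall>n\<ge>M1. N (f n - a) < N (a - b)"
    using assms(1) e unfolding conv_wrt_def by blast
  obtain M2 where M2: "\<forall>n\<ge>M2. N (f n - b) < N (a - b)"
    using assms(2) e unfolding conv_wrt_def by blast
  let ?n = "max M1 M2"
  have "a - b = (f ?n - b) - (f ?n - a)" by simp
  hence "N (a - b) \<le> max (N (f ?n - b)) (N (f ?n - a))" using na_diff by metis
  moreover have "N (f ?n - a) < N (a - b)" "N (f ?n - b) < N (a - b)" using M1 M2 by auto
  ultimately show False by simp
qed

lemma conv_const: "conv_wrt N (\<lambda>n. c) c"
  unfolding conv_wrt_def using na_0 by simp

lemma conv_mult: assumes "conv_wrt N f a" "conv_wrt N g b"
  shows "conv_wrt N (\<lambda>n. f n * g n) (a * b)"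
  unfolding conv_wrt_def
proof (intro allI impI)
  fix \<epsilon> :: real assume e: "\<epsilon> > 0"
  define K where "K = max 1 (N a)"
  define K' where "K' = max 1 (N b)"
  have K: "K > 0" "K' > 0" unfolding K_def K'_def by auto
  have d: "min 1 (\<epsilon> / K') > 0" using e K by simp
  obtain M1 where M1: "\<forall>n\<ge>M1. N (f n - a) < min 1 (\<epsilon> / K')"
    using assms(1) d unfolding conv_wrt_def by blast
  obtain M2 where M2: "\<forall>n\<ge>M2. N (g n - b) < \<epsilon> / K"
    using assms(2) e K unfolding conv_wrt_def by (meson divide_pos_pos)
  show "\<exists>M. \<forall>n\<ge>M. N (f n * g n - a * b) < \<epsilon>"
  proof (intro exI allI impI)
    fix n assume n: "max M1 M2 \<le> n"
    have fa: "N (f n - a) < 1" "N (f n - a) < \<epsilon> / K'" and gb: "N (g n - b) < \<epsilon> / K"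
      using M1 M2 n by auto
    have "N (f n) \<le> max (N (f n - a)) (N a)" using na_add[of "f n - a" a] by simp
    hence Nf: "N (f n) \<le> K" using fa unfolding K_def by auto
    have "N (f n * (g n - b)) \<le> K * N (g n - b)"
      using Nf na_ge0 by (simp add: na_mult mult_right_mono)
    also have "\<dots> < \<epsilon>" using gb K by (simp add: pos_less_divide_eq mult.commute)
    finally have t1: "N (f n * (g n - b)) < \<epsilon>" .
    have "N ((f n - a) * b) \<le> N (f n - a) * K'"
      using na_ge0 unfolding K'_def by (simp add: na_mult mult_left_mono)
    also have "\<dots> < \<epsilon>" using fa K by (simp add: pos_less_divide_eq)
    finally have t2: "N ((f n - a) * b) < \<epsilon>" .
    have "f n * g n - a * b = f n * (g n - b) + (f n - a) * b" by (simp add: algebra_simps)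
    thus "N (f n * g n - a * b) < \<epsilon>"
      using na_add[of "f n * (g n - b)" "(f n - a) * b"] t1 t2 by simp
  qed
qed

lemma conv_prod: assumes "finite A" "\<forall>i\<in>A. conv_wrt N (f i) (L i)"
  shows "conv_wrt N (\<lambda>n. \<Prod>i\<in>A. f i n) (\<Prod>i\<in>A. L i)"
  using assms
proof (induction A rule: finite_induct)
  case (insert x F)
  then show ?case using conv_mult[of "f x" "L x" "\<lambda>n. \<Prod>i\<in>F. f i n"] by simp
qed (simp add: conv_const)

lemma conv_power: assumes "conv_wrt N f a" shows "conv_wrt N (\<lambda>n. f n ^ k) (a ^ k)"
  by (induction k) (auto simp: conv_const conv_mult assms)

lemma conv_geometric:
  assumes r: "0 \<le> r" "r < 1" and bound: "\<forall>n. N (f n - L) \<le> r ^ n"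
  shows "conv_wrt N f L"
  unfolding conv_wrt_def
proof (intro allI impI)
  fix \<epsilon> :: real assume "\<epsilon> > 0"
  then obtain M where M: "r ^ M < \<epsilon>" using real_arch_pow_inv r(2) by blast
  have "N (f n - L) < \<epsilon>" if "M \<le> n" for n
  proof -
    have "r ^ n \<le> r ^ M" using power_decreasing[OF that r(1)] r(2) by simp
    hence "N (f n - L) \<le> r ^ M" using bound order_trans by blast
    thus ?thesis using M by linarith
  qed
  thus "\<exists>M. \<forall>n\<ge>M. N (f n - L) < \<epsilon>" by blast
qed

text \<open>In a complete field, geometrically decreasing increments give a convergent sequence:
  by the ultrametric inequality \<open>N (P m - P n) \<le> r ^ n\<close> for all \<open>m \<ge> n\<close>.\<close>
lemma conv_of_small_increments:
  assumes cpl: "complete_wrt N" and r: "0 \<le> r" "r < 1"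
    and inc: "\<forall>n. N (P (Suc n) - P n) \<le> r ^ n"
  shows "\<exists>L. conv_wrt N P L"
proof -
  have tail: "N (P m - P n) \<le> r ^ n" if "n \<le> m" for m n
    using that
  proof (induction m rule: dec_induct)
    case (step m)
    have "P (Suc m) - P n = (P (Suc m) - P m) + (P m - P n)" by simp
    hence "N (P (Suc m) - P n) \<le> max (N (P (Suc m) - P m)) (N (P m - P n))" using na_add by metis
    moreover have "r ^ m \<le> r ^ n" using step(1) r by (simp add: power_decreasing)
    ultimately show ?case using inc step(3) by (meson max.boundedI order_trans)
  qed (simp add: na_0 r)
  have "\<forall>\<epsilon>>0. \<exists>M. \<forall>m\<ge>M. \<forall>n\<ge>M. N (P m - P n) < \<epsilon>"
  proof (intro allI impI)
    fix \<epsilon> :: real assume "\<epsilon> > 0"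
    then obtain M where M: "r ^ M < \<epsilon>" using real_arch_pow_inv r(2) by blast
    have "N (P m - P n) < \<epsilon>" if "M \<le> m" "M \<le> n" for m n
    proof -
      have "N (P m - P n) \<le> r ^ min m n"
        using tail[of n m] tail[of m n] na_diff_commute[of "P m" "P n"] by (cases "n \<le> m") auto
      also have "\<dots> \<le> r ^ M" using that r by (intro power_decreasing) auto
      finally show ?thesis using M by linarith
    qed
    thus "\<exists>M. \<forall>m\<ge>M. \<forall>n\<ge>M. N (P m - P n) < \<epsilon>" by blast
  qed
  thus ?thesis using cpl unfolding complete_wrt_def by blast
qed

text \<open>All partial products have absolute value \<open>1\<close>, and consecutive ones differ by \<open>N (s n)\<close>.\<close>
lemma inverse_product_converges:
  assumes cpl: "complete_wrt N" and r: "0 \<le> r" "r < 1" and s: "\<forall>j. N (s j) \<le> r ^ Suc j"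
  shows "\<exists>L. conv_wrt N (\<lambda>n. \<Prod>j<n. inverse (1 - s j)) L"
proof -
  define P where "P n = (\<Prod>j<n. inverse (1 - s j))" for n
  have small: "N (s j) \<le> r ^ j" for j
  proof -
    have "r ^ Suc j \<le> r ^ j" using power_decreasing[of j "Suc j" r] r by simp
    thus ?thesis using s order_trans by blast
  qed
  have "r ^ Suc j < 1" for j using r by (simp add: power_less_one_iff del: power_Suc)
  hence s1: "N (s j) < 1" for j using s by (meson le_less_trans)
  have NP: "N (P n) = 1" for n
    by (induction n) (simp_all add: P_def na_1 na_mult na_inverse na_one_minus[OF s1])
  have "N (P (Suc n) - P n) = N (s n)" for n
  proof -
    have "1 - s n \<noteq> 0" using na_one_minus[OF s1[of n]] na_0 by auto
    hence "P (Suc n) - P n = P n * (s n / (1 - s n))" unfolding P_def by (simp add: field_simps)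
    thus ?thesis by (simp add: na_mult na_divide NP na_one_minus[OF s1])
  qed
  thus ?thesis using conv_of_small_increments[OF cpl r] small unfolding P_def by simp
qed

end

section \<open>The Frobenius map \<open>x \<mapsto> x ^ q\<close>\<close>

context
  fixes q e :: nat
  assumes char_prime: "prime CHAR('a::field)" and q_def: "q = CHAR('a) ^ e" and e_pos: "e \<ge> 1"
begin

lemma q_ge2: "q \<ge> 2"
proof -
  have "CHAR('a) \<ge> 2" using char_prime prime_ge_2_nat by blast
  hence "CHAR('a) ^ 1 \<le> CHAR('a) ^ e" using e_pos by (intro power_increasing) auto
  thus ?thesis using q_def \<open>CHAR('a) \<ge> 2\<close> by simp
qed

lemma q_power_char: "q ^ k = CHAR('a) ^ (e * k)"
  by (simp add: q_def power_mult)

lemma frob_add: "(x + y :: 'a) ^ (q ^ k) = x ^ (q ^ k) + y ^ (q ^ k)"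
  using freshmans_dream'[OF char_prime q_power_char] .

lemma frob_sum: "(sum f A :: 'a) ^ q = (\<Sum>i\<in>A. f i ^ q)"
  using freshmans_dream_sum'[OF char_prime q_power_char[of 1]] by simp

lemma frob_neg: "(- x :: 'a) ^ (q ^ k) = - (x ^ (q ^ k))"
proof -
  have "q ^ k > 0" using q_ge2 by simp
  hence "(0::'a) ^ (q ^ k) = 0" by (rule zero_power)
  have "x ^ (q ^ k) + (-x) ^ (q ^ k) = (x + - x) ^ (q ^ k)" by (rule frob_add[symmetric])
  also have "\<dots> = 0" using \<open>(0::'a) ^ (q ^ k) = 0\<close> by simp
  finally show ?thesis by (simp add: eq_neg_iff_add_eq_0 add.commute)
qed

lemma frob_inj: assumes "(x::'a) ^ q = y ^ q" shows "x = y"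
proof -
  have "(x - y) ^ (q ^ 1) = 0" using frob_add[of x "-y" 1] frob_neg[of y 1] assms by simp
  thus ?thesis by simp
qed

lemma frob_zero: "(0::'a) ^ q = 0" using q_ge2 by simp

lemma frob_poly_mult:
  "map_poly (\<lambda>x. x ^ q) (a * b :: 'a poly) = map_poly (\<lambda>x. x ^ q) a * map_poly (\<lambda>x. x ^ q) b"
proof (rule poly_eqI)
  fix n
  have "coeff (map_poly (\<lambda>x. x ^ q) (a * b)) n = (\<Sum>i\<le>n. coeff a i * coeff b (n-i)) ^ q"
    by (simp only: coeff_map_poly[of "\<lambda>x. x ^ q", OF frob_zero] coeff_mult)
  also have "\<dots> = (\<Sum>i\<le>n. (coeff a i) ^ q * (coeff b (n-i)) ^ q)"
    by (simp only: frob_sum power_mult_distrib)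
  also have "\<dots> = coeff (map_poly (\<lambda>x. x ^ q) a * map_poly (\<lambda>x. x ^ q) b) n"
    by (simp only: coeff_map_poly[of "\<lambda>x. x ^ q", OF frob_zero] coeff_mult)
  finally show "coeff (map_poly (\<lambda>x. x ^ q) (a * b)) n
              = coeff (map_poly (\<lambda>x. x ^ q) a * map_poly (\<lambda>x. x ^ q) b) n" .
qed

lemma frob_poly_prod:
  "map_poly (\<lambda>x. x ^ q) (\<Prod>i\<in>A. f i :: 'a poly) = (\<Prod>i\<in>A. map_poly (\<lambda>x. x ^ q) (f i))"
  by (induction A rule: infinite_finite_induct) (auto simp: frob_poly_mult)

lemma coeffs_in_Fq_iff: "(\<forall>i. coeff p i \<in> Fq q) \<longleftrightarrow> map_poly (\<lambda>x. x ^ q) p = (p :: 'a poly)"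
proof
  assume "\<forall>i. coeff p i \<in> Fq q"
  thus "map_poly (\<lambda>x. x ^ q) p = p"
    by (intro poly_eqI) (simp add: coeff_map_poly frob_zero Fq_def)
next
  assume "map_poly (\<lambda>x. x ^ q) p = p"
  hence "coeff (map_poly (\<lambda>x. x ^ q) p) i = coeff p i" for i by simp
  thus "\<forall>i. coeff p i \<in> Fq q" unfolding Fq_def by (simp add: coeff_map_poly frob_zero)
qed

lemma poly_frob:
  assumes "\<forall>i. coeff p i \<in> Fq q" shows "poly p ((z::'a) ^ q) = poly p z ^ q"
proof -
  have "poly p z ^ q = (\<Sum>i\<le>degree p. (coeff p i * z ^ i) ^ q)"
    by (simp add: poly_altdef frob_sum)
  also have "\<dots> = (\<Sum>i\<le>degree p. coeff p i * (z ^ q) ^ i)"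
    using assms unfolding Fq_def
    by (intro sum.cong) (simp_all add: power_mult_distrib flip: power_mult add: mult.commute)
  finally show ?thesis by (simp add: poly_altdef)
qed

lemma poly_frob_iter:
  assumes "\<forall>i. coeff p i \<in> Fq q" shows "poly p ((z::'a) ^ (q ^ n)) = poly p z ^ (q ^ n)"
proof (induction n)
  case (Suc n)
  have pow: "w ^ q ^ Suc n = (w ^ q ^ n) ^ q" for w :: 'a by (simp only: power_Suc2 power_mult)
  have "poly p (z ^ q ^ Suc n) = poly p ((z ^ q ^ n) ^ q)" by (simp only: pow)
  also have "\<dots> = (poly p z ^ q ^ n) ^ q" using poly_frob[OF assms] Suc by simp
  finally show ?case by (simp only: pow)
qed simp

lemma stable_root_set_poly_in_Fq:
  fixes B :: "'a set"
  assumes "finite B" and "(\<lambda>x. x ^ q) ` B = B"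
  shows "\<forall>i. coeff (\<Prod>x\<in>B. [:-x, 1:]) i \<in> Fq (q::nat)"
proof -
  have inj: "inj_on (\<lambda>x::'a. x ^ q) B" by (auto intro!: inj_onI frob_inj)
  have "map_poly (\<lambda>x. x ^ q) (\<Prod>x\<in>B. [:-x, 1:]) = (\<Prod>x\<in>B. [:-(x ^ q), 1:])"
    using frob_neg[of _ 1] by (simp add: frob_poly_prod map_poly_pCons frob_zero)
  also have "\<dots> = (\<Prod>y\<in>(\<lambda>x. x ^ q) ` B. [:-y, 1:])"
    using prod.reindex[OF inj, of "\<lambda>y. [:-y, 1:]"] by (simp add: o_def)
  finally show ?thesis using assms(2) coeffs_in_Fq_iff by simp
qed

end

lemma prod_linear_factors_dvd:
  fixes v :: "'a::idom poly"
  assumes "finite B" "\<forall>x\<in>B. poly v x = 0"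
  shows "(\<Prod>x\<in>B. [:-x, 1:]) dvd v"
  using assms
proof (induction B rule: finite_induct)
  case (insert x S)
  then obtain w where w: "v = (\<Prod>y\<in>S. [:-y, 1:]) * w" by (auto elim: dvdE)
  have "poly (\<Prod>y\<in>S. [:-y, 1:]) x \<noteq> 0" using insert(1,2) by (simp add: poly_prod)
  hence "poly w x = 0" using w insert(4) by simp
  then obtain u where "w = [:-x, 1:] * u" using poly_eq_0_iff_dvd by (metis dvdE)
  hence "v = ([:-x, 1:] * (\<Prod>y\<in>S. [:-y, 1:])) * u" using w by (simp only: mult_ac)
  thus ?case using insert(1,2) by (simp add: dvdI)
qed simp

section \<open>Orbits of an iterated map\<close>

text \<open>If \<open>f (Suc n) = g (f n)\<close> and the set \<open>{f n | n \<ge> 1}\<close> is finite of size \<open>d\<close>,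
  then \<open>f 1, \<dots>, f d\<close> are pairwise distinct and exhaust that set: a repetition \<open>f i = f j\<close>
  with \<open>i < j\<close> would confine the whole orbit to \<open>f ` {1..<j}\<close>.\<close>
lemma orbit_enumeration:
  assumes step: "\<And>n. f (Suc n) = g (f n)"
    and fin: "finite (f ` {1..})" and d: "card (f ` {1..}) = d"
  shows "inj_on f {1..d}" and "f ` {1..d} = f ` {1..}"
proof -
  have shift: "f (i + k) = f (j + k)" if "f i = f j" for i j k
    by (induction k) (simp_all add: that step)
  have distinct: "f i \<noteq> f j" if ij: "1 \<le> i" "i < j" "j \<le> d" for i j
  proof
    assume eq: "f i = f j"
    have orbit: "f n \<in> f ` {1..<j}" if "n \<ge> 1" for n
      using that
    proof (induction n rule: less_induct)
      case (less n)
      show ?case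
      proof (cases "n < j")
        case False
        have "f n = f (i + (n - j))" using shift[OF eq, of "n - j"] False by simp
        thus ?thesis using less.IH[of "i + (n - j)"] ij False by simp
      qed (use less.prems in auto)
    qed
    have "f ` {1..} \<subseteq> f ` {1..<j}" using orbit by auto
    hence "d \<le> card (f ` {1..<j})" using d card_mono[of "f ` {1..<j}" "f ` {1..}"] by simp
    also have "\<dots> \<le> card {1..<j}" by (rule card_image_le) simp
    finally show False using ij by simp
  qed
  show inj: "inj_on f {1..d}"
    by (rule inj_onI) (metis atLeastAtMost_iff distinct linorder_neqE_nat)
  show "f ` {1..d} = f ` {1..}"
    using card_image[OF inj] d by (intro card_subset_eq[OF fin]) auto
qed

section \<open>Factorization of an irreducible polynomial over \<open>F_q\<close>\<close>

context
  fixes q e :: nat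
  assumes char_prime: "prime CHAR('a::field)" and q_def: "q = CHAR('a) ^ e" and e_pos: "e \<ge> 1"
begin

lemma frobenius_orbit_roots:
  fixes v :: "'a poly"
  assumes "\<forall>i. coeff v i \<in> Fq q" and "poly v lam = 0"
  shows "poly v (lam ^ (q ^ n)) = 0"
  using poly_frob_iter[OF char_prime q_def e_pos assms(1)] assms(2) q_ge2[OF char_prime q_def e_pos]
  by simp

text \<open>A monic irreducible \<open>v\<close> over \<open>F_q\<close> with a root \<open>\<lambda>\<close> is the product of \<open>X - x\<close> over the
  Frobenius orbit \<open>{\<lambda>^q^n | n \<ge> 1}\<close>: that product divides \<open>v\<close>, has coefficients in \<open>F_q\<close>
  because the orbit is Frobenius-stable, and is non-constant, so the cofactor is \<open>1\<close>.\<close>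
lemma irreducible_is_orbit_poly:
  fixes v :: "'a poly"
  assumes lc: "lead_coeff v = 1" and irr: "irreducible_over (Fq q) v" and root: "poly v lam = 0"
  defines "B \<equiv> (\<lambda>n. lam ^ (q ^ n)) ` {1..}"
  shows "finite B" and "v = (\<Prod>x\<in>B. [:-x, 1:])"
proof -
  have vF: "\<forall>i. coeff v i \<in> Fq q" and deg: "degree v \<ge> 1"
    and factor: "\<And>a b. (\<forall>i. coeff a i \<in> Fq q) \<Longrightarrow> (\<forall>i. coeff b i \<in> Fq q) \<Longrightarrow> v = a * b
        \<Longrightarrow> degree a = 0 \<or> degree b = 0"
    using irr unfolding irreducible_over_def by (blast, blast, metis)
  have roots: "\<forall>x\<in>B. poly v x = 0"
    unfolding B_def using frobenius_orbit_roots[OF vF root] by blast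
  have v0: "v \<noteq> 0" using deg by auto
  have "B \<subseteq> {x. poly v x = 0}" using roots by blast
  thus finB: "finite B" using poly_roots_finite[OF v0] by (rule finite_subset)
  have "(\<lambda>x. x ^ q) ` B \<subseteq> B"
  proof (rule image_subsetI)
    fix x assume "x \<in> B"
    then obtain n where "n \<ge> 1" "x = lam ^ (q ^ n)" by (auto simp: B_def)
    hence "x ^ q = lam ^ (q ^ Suc n)" by (simp only: power_Suc2 power_mult)
    thus "x ^ q \<in> B" unfolding B_def by (auto intro!: image_eqI[where x = "Suc n"])
  qed
  hence stable: "(\<lambda>x. x ^ q) ` B = B"
    by (intro endo_inj_surj[OF finB]) (auto intro!: inj_onI frob_inj[OF char_prime q_def e_pos])
  define g where "g = (\<Prod>x\<in>B. [:-x, 1:])"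
  have gF: "\<forall>i. coeff g i \<in> Fq q"
    unfolding g_def by (rule stable_root_set_poly_in_Fq[OF char_prime q_def e_pos finB stable])
  obtain h where vgh: "v = g * h" using prod_linear_factors_dvd[OF finB roots] g_def by (auto elim: dvdE)
  have g0: "g \<noteq> 0" using v0 vgh by auto
  note Fq_iff = coeffs_in_Fq_iff[OF char_prime q_def e_pos]
  have "g * h = map_poly (\<lambda>x. x ^ q) (g * h)" using vF Fq_iff vgh by metis
  also have "\<dots> = g * map_poly (\<lambda>x. x ^ q) h"
    using gF Fq_iff frob_poly_mult[OF char_prime q_def e_pos, of g h] by metis
  finally have hF: "\<forall>i. coeff h i \<in> Fq q" using g0 Fq_iff by simp
  have "degree g = card B" unfolding g_def by (simp add: degree_prod_eq_sum_degree)
  moreover have "lam ^ (q ^ 1) \<in> B" unfolding B_def by (rule imageI) simp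
  ultimately have "degree g \<noteq> 0" using finB card_gt_0_iff by fastforce
  hence "degree h = 0" using factor[OF gF hF vgh] by simp
  moreover have "lead_coeff h = 1"
    using lc vgh by (simp add: lead_coeff_mult g_def lead_coeff_prod)
  ultimately have "h = 1" by (metis degree_eq_zeroE lead_coeff_pCons(2) one_pCons)
  thus "v = (\<Prod>x\<in>B. [:-x, 1:])" using vgh g_def by simp
qed

lemma irreducible_frobenius_factorization:
  fixes v :: "'a poly"
  assumes "lead_coeff v = 1" and "irreducible_over (Fq q) v" and "poly v lam = 0"
  shows "poly v z = (\<Prod>i=1..degree v. z - lam ^ (q ^ i))"
proof -
  define f where "f n = lam ^ (q ^ n)" for n
  note orbit = irreducible_is_orbit_poly[OF assms, folded f_def]
  have card: "card (f ` {1..}) = degree v"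
    by (subst orbit(2)) (simp add: degree_prod_eq_sum_degree orbit(1))
  have step: "f (Suc n) = f n ^ q" for n unfolding f_def by (simp only: power_Suc2 power_mult)
  note enum = orbit_enumeration[of f "\<lambda>x. x ^ q", OF step orbit(1) card]
  have "poly v z = (\<Prod>x\<in>f ` {1..}. z - x)" by (subst orbit(2)) (simp add: poly_prod)
  also have "\<dots> = (\<Prod>i=1..degree v. z - f i)"
    using prod.reindex[OF enum(1), of "\<lambda>x. z - x"] enum(2) by (simp add: o_def)
  finally show ?thesis unfolding f_def .
qed

end

section \<open>The function \<open>\<omega>\<close> on the Frobenius orbit of \<open>\<lambda>\<close>\<close>

text \<open>An element whose iterated \<open>q\<close>-th powers take only finitely many values has \<open>N x \<le> 1\<close>:
  otherwise the values \<open>N x ^ q ^ n\<close> would be pairwise distinct.\<close>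
lemma bounded_of_finite_power_orbit:
  fixes N :: "'a::field \<Rightarrow> real"
  assumes na: "nonarch_abs N" and q: "q \<ge> 2" and fin: "finite (range (\<lambda>n. x ^ (q ^ n)))"
  shows "N x \<le> 1"
proof (rule ccontr)
  assume big: "\<not> N x \<le> 1"
  have "inj (\<lambda>n. x ^ (q ^ n))"
  proof (rule injI)
    fix i j assume "x ^ (q ^ i) = x ^ (q ^ j)"
    hence "N (x ^ (q ^ i)) = N (x ^ (q ^ j))" by simp
    hence "N x ^ (q ^ i) = N x ^ (q ^ j)" by (simp add: na_power[OF na])
    hence "q ^ i = q ^ j" using big by (simp add: power_inject_exp)
    thus "i = j" using q by (simp add: power_inject_exp)
  qed
  thus False using fin finite_imageD by blast
qed

text \<open>For \<open>N t \<le> 1\<close> the product defining \<open>\<omega>(t)\<close> converges: its \<open>j\<close>-th factor is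
  \<open>(1 - s j)\<inverse>\<close> with \<open>N (s j) \<le> q\<^sup>-\<^sup>q\<^sup>^\<^sup>j \<le> q\<^sup>-\<^sup>(\<^sup>j\<^sup>+\<^sup>1\<^sup>)\<close>.\<close>
lemma omega_as_limit:
  fixes N :: "'a::field \<Rightarrow> real"
  assumes na: "nonarch_abs N" and cpl: "complete_wrt N"
    and q: "q \<ge> 2" and N\<theta>: "N \<theta> = real q" and Nt: "N t \<le> 1"
  shows "\<exists>L. conv_wrt N (\<lambda>n. \<Prod>j<n. inverse (1 - t / \<theta> ^ (q ^ j))) L \<and> omega N q \<theta> \<iota> t = \<iota> * L"
proof -
  define r :: real where "r = 1 / q"
  have r: "0 \<le> r" "r < 1" using q unfolding r_def by auto
  have small: "N (t / \<theta> ^ (q ^ j)) \<le> r ^ Suc j" for j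
  proof -
    have "Suc j \<le> 2 ^ j" by (rule Suc_leI[OF less_exp])
    also have "\<dots> \<le> q ^ j" using q by (simp add: power_mono)
    finally have "r ^ q ^ j \<le> r ^ Suc j" using r by (intro power_decreasing) auto
    moreover have "N (t / \<theta> ^ (q ^ j)) \<le> r ^ q ^ j"
      using Nt q na_ge0[OF na, of t]
      by (simp add: na_divide[OF na] na_power[OF na] N\<theta> r_def power_one_over divide_right_mono)
    ultimately show ?thesis by linarith
  qed
  then obtain L where L: "conv_wrt N (\<lambda>n. \<Prod>j<n. inverse (1 - t / \<theta> ^ (q ^ j))) L"
    using inverse_product_converges[OF na cpl r, of "\<lambda>j. t / \<theta> ^ (q ^ j)"] small by blast
  hence "(THE L. conv_wrt N (\<lambda>n. \<Prod>j<n. inverse (1 - t / \<theta> ^ (q ^ j))) L) = L"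
    using conv_unique[OF na] by blast
  thus ?thesis using L unfolding omega_def by auto
qed

text \<open>Telescoping: \<open>(\<Prod>j<n. x\<^sup>-\<^sup>q\<^sup>^\<^sup>j)\<^sup>q\<^sup>-\<^sup>1 = x / x\<^sup>q\<^sup>^\<^sup>n\<close>, since \<open>(q - 1) q\<^sup>j = q\<^sup>j\<^sup>+\<^sup>1 - q\<^sup>j\<close>.\<close>
lemma telescoping_inverse_powers:
  fixes x :: "'a::field"
  assumes "x \<noteq> 0" and "q \<ge> 1"
  shows "(\<Prod>j<n. inverse (x ^ (q ^ j))) ^ (q - 1) * x ^ (q ^ n) = x"
proof (induction n)
  case (Suc n)
  define y where "y = x ^ (q ^ n)"
  have "y \<noteq> 0" using assms(1) unfolding y_def by simp
  obtain k where k: "q = Suc k" using assms(2) by (cases q) auto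
  have "x ^ (q ^ Suc n) = y ^ (q - 1) * y"
    unfolding y_def k by (simp only: power_Suc2 power_mult diff_Suc_1)
  hence "(\<Prod>j<Suc n. inverse (x ^ (q ^ j))) ^ (q - 1) * x ^ (q ^ Suc n)
      = ((\<Prod>j<n. inverse (x ^ (q ^ j))) ^ (q - 1) * y) * (inverse y ^ (q - 1) * y ^ (q - 1))"
    by (simp add: y_def power_mult_distrib mult_ac)
  also have "inverse y ^ (q - 1) * y ^ (q - 1) = 1" using \<open>y \<noteq> 0\<close> by (simp add: power_inverse)
  finally show ?case using Suc unfolding y_def by simp
qed simp

text \<open>If \<open>N (x - 1) < 1\<close> then \<open>x / x\<^sup>q\<^sup>^\<^sup>n \<rightarrow> x\<close>: by Frobenius \<open>x\<^sup>q\<^sup>^\<^sup>n = 1 + w\<close> with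
  \<open>w = (x - 1)\<^sup>q\<^sup>^\<^sup>n\<close>, and \<open>N (x / (1 + w) - x) = N w \<le> N (x - 1) ^ n\<close>.\<close>
lemma frobenius_quotient_converges:
  fixes N :: "'a::field \<Rightarrow> real"
  assumes na: "nonarch_abs N"
    and char_prime: "prime CHAR('a)" and q_def: "q = CHAR('a) ^ e" and e_pos: "e \<ge> 1"
    and near: "N (x - 1) < 1"
  shows "conv_wrt N (\<lambda>n. x / x ^ (q ^ n)) x"
proof (rule conv_geometric[OF na na_ge0[OF na] near], intro allI)
  fix n
  define w where "w = (x - 1) ^ (q ^ n)"
  have xw: "x ^ (q ^ n) = 1 + w"
    using frob_add[OF char_prime q_def e_pos, of "x - 1" 1 n] unfolding w_def by (simp add: add.commute)
  have Nx: "N x = 1" using na_one_plus[OF na near] by simp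
  have "n \<le> q ^ n" using less_exp[of n] power_mono[of 2 q n] q_ge2[OF char_prime q_def e_pos] by linarith
  hence "N w \<le> N (x - 1) ^ n"
    unfolding w_def na_power[OF na] using near na_ge0[OF na] by (intro power_decreasing) auto
  moreover have "N w < 1"
  proof -
    have "1 \<le> q ^ n" using q_ge2[OF char_prime q_def e_pos] by simp
    hence "N w \<le> N (x - 1) ^ 1"
      unfolding w_def na_power[OF na] using near na_ge0[OF na] by (intro power_decreasing) auto
    thus ?thesis using near by simp
  qed
  moreover have "N (x / (1 + w) - x) = N w"
  proof -
    have "1 + w \<noteq> 0" using na_one_plus[OF na \<open>N w < 1\<close>] na_0[OF na] by auto
    hence "x / (1 + w) - x = - (x * w / (1 + w))" by (simp add: field_simps)
    thus ?thesis by (simp add: na_minus[OF na] na_divide[OF na] na_mult[OF na] Nx na_one_plus[OF na \<open>N w < 1\<close>])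
  qed
  ultimately show "N (x / x ^ (q ^ n) - x) \<le> N (x - 1) ^ n" using xw by simp
qed

text \<open>With
  \<open>x\<^sub>0 = v(\<theta>)/\<theta>\<^sup>d\<close>, the \<open>j\<close>-th factors multiply over \<open>i\<close> to \<open>v(\<theta>\<^sup>q\<^sup>^\<^sup>j)/\<theta>\<^sup>d\<^sup>q\<^sup>^\<^sup>j = x\<^sub>0\<^sup>q\<^sup>^\<^sup>j\<close>,
  so the \<open>(q-1)\<close>-th power of the \<open>n\<close>-th partial product telescopes to \<open>x\<^sub>0 / x\<^sub>0\<^sup>q\<^sup>^\<^sup>n \<rightarrow> x\<^sub>0\<close>.\<close>
lemma product_of_omega_limits:
  fixes N :: "'a::field \<Rightarrow> real" and v :: "'a poly" and f L :: "nat \<Rightarrow> 'a"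
  assumes na: "nonarch_abs N"
    and char_prime: "prime CHAR('a)" and q_def: "q = CHAR('a) ^ e" and e_pos: "e \<ge> 1"
    and N\<theta>: "N \<theta> = real q"
    and fac: "\<And>z. poly v z = (\<Prod>i=1..d. z - f i)" and vF: "\<forall>i. coeff v i \<in> Fq q"
    and Nf: "\<And>i. N (f i) \<le> 1"
    and L: "\<And>i. conv_wrt N (\<lambda>n. \<Prod>j<n. inverse (1 - f i / \<theta> ^ (q ^ j))) (L i)"
  shows "(\<Prod>i=1..d. L i) ^ (q - 1) = poly v \<theta> / \<theta> ^ d"
proof -
  note q2 = q_ge2[OF char_prime q_def e_pos]
  have \<theta>0: "\<theta> \<noteq> 0" using N\<theta> q2 na_0[OF na] by auto
  define x0 where "x0 = poly v \<theta> / \<theta> ^ d"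
  have factor_j: "(\<Prod>i=1..d. 1 - f i / \<theta> ^ (q ^ j)) = x0 ^ (q ^ j)" for j
  proof -
    have "(\<Prod>i=1..d. 1 - f i / \<theta> ^ (q ^ j)) = (\<Prod>i=1..d. (\<theta> ^ (q ^ j) - f i) / \<theta> ^ (q ^ j))"
      using \<theta>0 by (intro prod.cong) (auto simp: field_simps)
    also have "\<dots> = (\<Prod>i=1..d. \<theta> ^ (q ^ j) - f i) / (\<theta> ^ (q ^ j)) ^ d"
      by (simp add: prod_dividef)
    also have "\<dots> = poly v \<theta> ^ (q ^ j) / (\<theta> ^ d) ^ (q ^ j)"
      using fac poly_frob_iter[OF char_prime q_def e_pos vF] by (simp flip: power_mult add: mult.commute)
    finally show ?thesis unfolding x0_def by (simp add: power_divide)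
  qed
  have "N (x0 - 1) \<le> 1 / q"
  proof -
    have "N (f i / \<theta>) \<le> 1 / q" for i using Nf[of i] q2 by (simp add: na_divide[OF na] N\<theta> divide_right_mono)
    thus ?thesis using prod_near_one[OF na, of "{1..d}" "\<lambda>i. f i / \<theta>" "1 / q"] q2 factor_j[of 0] by simp
  qed
  hence near: "N (x0 - 1) < 1" using q2 by (simp add: le_less_trans)
  hence "x0 \<noteq> 0" using na_1[OF na] na_minus[OF na, of 1] by auto
  have partial: "(\<Prod>i=1..d. \<Prod>j<n. inverse (1 - f i / \<theta> ^ (q ^ j))) ^ (q - 1) = x0 / x0 ^ (q ^ n)" for n
  proof -
    have "(\<Prod>i=1..d. \<Prod>j<n. inverse (1 - f i / \<theta> ^ (q ^ j)))
        = (\<Prod>j<n. \<Prod>i=1..d. inverse (1 - f i / \<theta> ^ (q ^ j)))"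
      by (rule prod.swap)
    also have "\<dots> = (\<Prod>j<n. inverse (\<Prod>i=1..d. 1 - f i / \<theta> ^ (q ^ j)))"
      using prod_inversef[of "\<lambda>i. 1 - f i / \<theta> ^ (q ^ _)" "{1..d}"] by (simp add: o_def)
    finally have "(\<Prod>i=1..d. \<Prod>j<n. inverse (1 - f i / \<theta> ^ (q ^ j))) = (\<Prod>j<n. inverse (x0 ^ (q ^ j)))"
      using factor_j by simp
    thus ?thesis using telescoping_inverse_powers[OF \<open>x0 \<noteq> 0\<close>, of q n] q2 \<open>x0 \<noteq> 0\<close>
      by (simp add: field_simps)
  qed
  have "conv_wrt N (\<lambda>n. x0 / x0 ^ (q ^ n)) ((\<Prod>i=1..d. L i) ^ (q - 1))"
    using conv_power[OF na conv_prod[OF na, of "{1..d}"]] L by (simp flip: partial)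
  with frobenius_quotient_converges[OF na char_prime q_def e_pos near] show ?thesis
    unfolding x0_def using conv_unique[OF na] by blast
qed

theorem lemma3p6:
  fixes N :: "'a::field \<Rightarrow> real" and \<theta> \<iota> lam :: 'a and v :: "'a poly"
    and p e q :: nat
  assumes "prime p" and "CHAR('a) = p" and "e \<ge> 1" and "q = p ^ e"
    and "nonarch_abs N" and "complete_wrt N" and "alg_closed TYPE('a)"
    and "N \<theta> = real q"
    and "\<iota> ^ (q - 1) = - \<theta>"
    and "lead_coeff v = 1" and "irreducible_over (Fq q) v"
    and "poly v lam = 0"
  shows "(- 1) ^ degree v * poly v \<theta> =
         (\<Prod>i = 1..degree v. (omega N q \<theta> \<iota> (lam ^ (q ^ i))) ^ (q - 1))"
proof -
  have char: "prime CHAR('a)" "q = CHAR('a) ^ e" using assms(1,2,4) by simp_all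
  note q2 = q_ge2[OF char assms(3)]
  have vF: "\<forall>i. coeff v i \<in> Fq q" and "v \<noteq> 0"
    using assms(11) unfolding irreducible_over_def by auto
  have "range (\<lambda>n. lam ^ (q ^ n)) \<subseteq> {x. poly v x = 0}"
    using frobenius_orbit_roots[OF char assms(3) vF assms(12)] by auto
  hence "finite (range (\<lambda>n. lam ^ (q ^ n)))"
    using poly_roots_finite[OF \<open>v \<noteq> 0\<close>] by (rule finite_subset)
  hence "N lam \<le> 1" by (rule bounded_of_finite_power_orbit[OF assms(5) q2])
  hence "N (lam ^ (q ^ i)) \<le> 1" for i using na_ge0[OF assms(5)] by (simp add: na_power[OF assms(5)] power_le_one)
  hence "\<forall>i. \<exists>Li. conv_wrt N (\<lambda>n. \<Prod>j<n. inverse (1 - lam ^ (q ^ i) / \<theta> ^ (q ^ j))) Li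
      \<and> omega N q \<theta> \<iota> (lam ^ (q ^ i)) = \<iota> * Li"
    using omega_as_limit[OF assms(5,6) q2 assms(8)] by blast
  then obtain L where L: "\<And>i. conv_wrt N (\<lambda>n. \<Prod>j<n. inverse (1 - lam ^ (q ^ i) / \<theta> ^ (q ^ j))) (L i)"
    and \<omega>: "\<And>i. omega N q \<theta> \<iota> (lam ^ (q ^ i)) = \<iota> * L i"
    by metis
  have "(\<Prod>i = 1..degree v. (omega N q \<theta> \<iota> (lam ^ (q ^ i))) ^ (q - 1))
      = (\<Prod>i = 1..degree v. (- \<theta>) * L i ^ (q - 1))"
    by (simp only: \<omega> power_mult_distrib assms(9))
  also have "\<dots> = (- \<theta>) ^ degree v * (\<Prod>i = 1..degree v. L i) ^ (q - 1)"
    by (simp only: prod.distrib prod_constant prod_power_distrib) simp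
  also have "\<dots> = (- 1) ^ degree v * poly v \<theta>"
    using product_of_omega_limits[OF assms(5) char assms(3,8) irreducible_frobenius_factorization[OF char assms(3,10-12)] vF _ L]
      \<open>\<And>i. N (lam ^ (q ^ i)) \<le> 1\<close> assms(8) q2 na_0[OF assms(5)]
    by (auto simp: power_minus[of \<theta>])
  finally show ?thesis ..
qed

end
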